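(* Let $p$ be a positive integer, $r\ge 2$ an integer, $s=p+2r$, and $M=(m_{ij})\in\mathfrak{so}(r,\mathbb{C})$. Let $S$ be the $(r-1)\times r$ matrix $S=\big(I_{r-1}\mid m\big)$, whose last column is $m=(m_{1r},\dots,m_{r-1,r})^t$. Define $\hat\Phi:U_{ps}(\mathbb{R})\to\mathbb{C}^{(r-1)\times p}$ by $\hat\Phi(X)=S(W+M\bar W)A^{-1}$, where for $X=(X_0;X_1;X_2;X_3)$ (blocks of $p,p,r,r$ rows) $A=X_0-X_1$ and $W=X_2+iX_3$. Then $\hat\Phi$ is independent of the last row of $X$, thus inducing a map $\Phi:U_{p,s-1}(\mathbb{R})\to\mathbb{C}^{(r-1)\times p}$, and the complex valued components of $\Phi$ constitute an orthogonal harmonic family of $\mathbf{GL}_p(\mathbb{R})$-invariant functions on $U_{p,s-1}(\mathbb{R})$, equipped with the semi-Euclidean metric.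
   Context: $\mathfrak{so}(r,\mathbb{C})$ is the set of complex skew-symmetric $r\times r$ matrices. For $n\ge1$, $U_{pn}(\mathbb{R})=\{X=\binom{X_0}{X'}\in\mathbb{R}^{(p+n)\times p}: -X_0^tX_0+X'^tX' \text{ negative definite}\}$ with $X_0$ the first $p$ rows; $U_{p,s-1}(\mathbb{R})$ is identified with the matrices obtained from elements of $U_{ps}(\mathbb{R})$ by deleting the last row. $\mathbf{GL}_p(\mathbb{R})$ acts by right multiplication. The semi-Euclidean metric is $(X,Y)=\mathrm{trace}(X^t\mathrm{diag}(-I_p,I_n)Y)$. For a semi-Riemannian manifold $(M,g)$ and complex functions $\phi,\psi$, $\tau(\phi)$ is the Laplace–Beltrami operator (extended complex-linearly) and $\kappa(\phi,\psi)=g(\mathrm{grad}\,\phi,\mathrm{grad}\,\psi)$ with $g$ extended complex-bilinearly. A set $\Omega$ of complex functions is an orthogonal harmonic family if $\tau(\phi)=0$ and $\kappa(\phi,\psi)=0$ for all $\phi,\psi\in\Omega$. *)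

theory Defs
  imports "HOL-Analysis.Analysis"
begin

text \<open>Real matrices are represented as functions nat => nat => real; a
(p+n) x p matrix is such a function vanishing outside the index range
{0..<p+n} x {0..<p}. Indices are 0-based.\<close>

type_synonym rmat = "nat \<Rightarrow> nat \<Rightarrow> real"
type_synonym cmat = "nat \<Rightarrow> nat \<Rightarrow> complex"

definition Upn :: "nat \<Rightarrow> nat \<Rightarrow> rmat set" where
  "Upn p n = {X. (\<forall>i j. (p + n \<le> i \<or> p \<le> j) \<longrightarrow> X i j = 0) \<and>
     (\<forall>v::nat \<Rightarrow> real. (\<exists>j<p. v j \<noteq> 0) \<longrightarrow>
        - (\<Sum>i<p. (\<Sum>j<p. X i j * v j)\<^sup>2) + (\<Sum>i\<in>{p..<p+n}. (\<Sum>j<p. X i j * v j)\<^sup>2) < 0)}"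

definition coord_shift :: "rmat \<Rightarrow> nat \<Rightarrow> nat \<Rightarrow> real \<Rightarrow> rmat" where
  "coord_shift X i j t = X(i := (X i)(j := X i j + t))"

definition pdiff :: "(rmat \<Rightarrow> complex) \<Rightarrow> nat \<Rightarrow> nat \<Rightarrow> rmat \<Rightarrow> complex" where
  "pdiff \<phi> i j X = vector_derivative (\<lambda>t. \<phi> (coord_shift X i j t)) (at 0)"

definition twice_pdiff :: "nat \<Rightarrow> nat \<Rightarrow> rmat set \<Rightarrow> (rmat \<Rightarrow> complex) \<Rightarrow> bool" where
  "twice_pdiff p n U \<phi> = (\<forall>X\<in>U. \<forall>i<p+n. \<forall>j<p.
      (\<lambda>t. \<phi> (coord_shift X i j t)) differentiable (at 0) \<and>
      (\<lambda>t. pdiff \<phi> i j (coord_shift X i j t)) differentiable (at 0))"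

definition msign :: "nat \<Rightarrow> nat \<Rightarrow> real" where
  "msign p i = (if i < p then -1 else 1)"

text \<open>Laplace-Beltrami operator tau and conformality operator kappa for the
semi-Euclidean metric (X,Y) = trace(X^t diag(-I_p,I_n) Y) on R^{(p+n) x p}.\<close>
definition tau :: "nat \<Rightarrow> nat \<Rightarrow> (rmat \<Rightarrow> complex) \<Rightarrow> rmat \<Rightarrow> complex" where
  "tau p n \<phi> X = (\<Sum>i<p+n. \<Sum>j<p. of_real (msign p i) * pdiff (pdiff \<phi> i j) i j X)"

definition kappa :: "nat \<Rightarrow> nat \<Rightarrow> (rmat \<Rightarrow> complex) \<Rightarrow> (rmat \<Rightarrow> complex) \<Rightarrow> rmat \<Rightarrow> complex" where
  "kappa p n \<phi> \<psi> X = (\<Sum>i<p+n. \<Sum>j<p. of_real (msign p i) * pdiff \<phi> i j X * pdiff \<psi> i j X)"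

definition orthogonal_harmonic_family ::
    "nat \<Rightarrow> nat \<Rightarrow> rmat set \<Rightarrow> (rmat \<Rightarrow> complex) set \<Rightarrow> bool" where
  "orthogonal_harmonic_family p n U \<Omega> =
     ((\<forall>\<phi>\<in>\<Omega>. \<forall>X\<in>U. tau p n \<phi> X = 0) \<and>
      (\<forall>\<phi>\<in>\<Omega>. \<forall>\<psi>\<in>\<Omega>. \<forall>X\<in>U. kappa p n \<phi> \<psi> X = 0))"

definition invertible_p :: "nat \<Rightarrow> rmat \<Rightarrow> bool" where
  "invertible_p p g = (\<exists>h. \<forall>i<p. \<forall>j<p.
      (\<Sum>k<p. g i k * h k j) = (if i = j then 1 else 0) \<and>
      (\<Sum>k<p. h i k * g k j) = (if i = j then 1 else 0))"

definition rmul :: "nat \<Rightarrow> rmat \<Rightarrow> rmat \<Rightarrow> rmat" where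
  "rmul p X g = (\<lambda>i j. if j < p then (\<Sum>k<p. X i k * g k j) else 0)"

definition GL_invariant :: "nat \<Rightarrow> rmat set \<Rightarrow> (rmat \<Rightarrow> complex) \<Rightarrow> bool" where
  "GL_invariant p U \<phi> = (\<forall>X\<in>U. \<forall>g. invertible_p p g \<longrightarrow> \<phi> (rmul p X g) = \<phi> X)"

definition inv_p :: "nat \<Rightarrow> rmat \<Rightarrow> rmat" where
  "inv_p p A = (SOME B. \<forall>i<p. \<forall>j<p.
      (\<Sum>k<p. A i k * B k j) = (if i = j then 1 else 0) \<and>
      (\<Sum>k<p. B i k * A k j) = (if i = j then 1 else 0))"

definition so_r :: "nat \<Rightarrow> cmat set" where
  "so_r r = {M. \<forall>i<r. \<forall>j<r. M j i = - M i j}"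

text \<open>The map Phi-hat(X) = S (W + M conj(W)) A^{-1}, with X = (X0;X1;X2;X3)
(row blocks of sizes p,p,r,r), A = X0 - X1, W = X2 + i X3, S = (I_{r-1} | m),
m the last column of M without its last entry.\<close>
definition Phi_hat :: "nat \<Rightarrow> nat \<Rightarrow> cmat \<Rightarrow> rmat \<Rightarrow> cmat" where
  "Phi_hat p r M X = (\<lambda>k j.
     if k < r - 1 \<and> j < p then
       (let A = (\<lambda>a b. X a b - X (p + a) b);
            Ai = inv_p p A;
            W = (\<lambda>l b. Complex (X (2*p + l) b) (X (2*p + r + l) b));
            B = (\<lambda>l b. W l b + (\<Sum>q<r. M l q * cnj (W q b)));
            C = (\<lambda>a b. B a b + M a (r - 1) * B (r - 1) b)
        in (\<Sum>q<p. C k q * of_real (Ai q j)))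
     else 0)"

end

theory Submission
  imports Defs "Jordan_Normal_Form.Determinant"
begin

text \<open>
  Write A = X0 - X1 and C = S (W + M conj W), so that Phi_hat X = C A^-1. On U_{pn} the
  matrix A is invertible, because A v = 0 would make the form of the definition of U_{pn}
  nonnegative at v. The matrix C is real linear in the rows of X2 and X3, and skewness of M kills
  the coefficient of the last row of X3, whence the independence of the last row; for two rows
  k, k' of C, the coefficient vectors (S + S M) and i (S - S M) of X2 and X3 are orthogonal, since
  (S + S M)(S + S M)^t - (S - S M)(S - S M)^t = 2 S (M + M^t) S^t = 0.
  Along a coordinate line of X2 or X3 the function Phi_hat is affine, so these rows contribute
  nothing to tau and, by the orthogonality, nothing to kappa. Along the coordinate line of entry
  (a, b) of X0 or of X1, A moves by the rank one matrix \<plusminus>t E_ab, and by the Sherman-Morrison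
  formula Phi_hat moves along t \<mapsto> \<gamma> t / (\<sigma> + \<beta> t) with \<sigma> = \<plusminus>1. The first and
  second derivatives at 0 are \<gamma> \<sigma> and -2 \<gamma> \<beta>, and the two rows enter the metric with opposite
  signs, so their contributions to tau and to kappa cancel. Finally C(X g) = C(X) g and
  A(X g) = A(X) g give the GL_p-invariance.
\<close>

section \<open>Matrix inverses\<close>

definition mat_mul ::
    "nat \<Rightarrow> (nat \<Rightarrow> nat \<Rightarrow> 'a) \<Rightarrow> (nat \<Rightarrow> nat \<Rightarrow> 'a) \<Rightarrow> nat \<Rightarrow> nat \<Rightarrow> 'a::comm_semiring_0"
  where "mat_mul p A B = (\<lambda>i j. \<Sum>k<p. A i k * B k j)"

definition is_inverse ::
    "nat \<Rightarrow> (nat \<Rightarrow> nat \<Rightarrow> 'a::comm_semiring_1) \<Rightarrow> (nat \<Rightarrow> nat \<Rightarrow> 'a) \<Rightarrow> bool"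
  where "is_inverse p A B \<longleftrightarrow> (\<forall>i<p. \<forall>j<p.
      mat_mul p A B i j = (if i = j then 1 else 0) \<and> mat_mul p B A i j = (if i = j then 1 else 0))"

lemma inv_p_eq_Eps: "inv_p p A = (SOME B. is_inverse p A B)"
  unfolding inv_p_def is_inverse_def mat_mul_def ..

lemma invertible_p_iff_is_inverse: "invertible_p p A \<longleftrightarrow> (\<exists>B. is_inverse p A B)"
  unfolding invertible_p_def is_inverse_def mat_mul_def ..

lemma mat_mul_assoc: "mat_mul p (mat_mul p A B) C = mat_mul p A (mat_mul p B C)"
proof (intro ext)
  fix i j
  have "(\<Sum>k<p. (\<Sum>l<p. A i l * B l k) * C k j) = (\<Sum>k<p. \<Sum>l<p. A i l * (B l k * C k j))"
    by (simp add: sum_distrib_right mult.assoc)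
  also have "\<dots> = (\<Sum>l<p. \<Sum>k<p. A i l * (B l k * C k j))"
    by (rule sum.swap)
  also have "\<dots> = (\<Sum>l<p. A i l * (\<Sum>k<p. B l k * C k j))"
    by (simp add: sum_distrib_left)
  finally show "mat_mul p (mat_mul p A B) C i j = mat_mul p A (mat_mul p B C) i j"
    by (simp add: mat_mul_def)
qed

lemma mat_mul_cong:
  assumes "\<And>k. k < p \<Longrightarrow> A i k = A' i k" "\<And>k. k < p \<Longrightarrow> B k j = B' k j"
  shows "mat_mul p A B i j = mat_mul p A' B' i j"
  using assms by (simp add: mat_mul_def)

lemma mat_mul_delta_left:
  assumes "l < p"
  shows "mat_mul p (\<lambda>i k. if i = k then 1 else 0) C l j = (C l j :: 'a::comm_semiring_1)"
proof -
  have "mat_mul p (\<lambda>i k. if i = k then 1 else 0) C l j = (\<Sum>k<p. if l = k then C k j else 0)"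
    unfolding mat_mul_def by (intro sum.cong) auto
  then show ?thesis using assms by simp
qed

lemma mat_mul_delta_right:
  assumes "j < p"
  shows "mat_mul p C (\<lambda>k j. if k = j then 1 else 0) l j = (C l j :: 'a::comm_semiring_1)"
proof -
  have "mat_mul p C (\<lambda>k j. if k = j then 1 else 0) l j = (\<Sum>k<p. if k = j then C l k else 0)"
    unfolding mat_mul_def by (intro sum.cong) auto
  then show ?thesis using assms by simp
qed

lemma mat_mul_of_real:
  "mat_mul p (\<lambda>i j. of_real (A i j)) (\<lambda>i j. of_real (B i j)) i j
    = (of_real (mat_mul p A B i j) :: 'a::{real_algebra_1,comm_ring})"
  by (simp add: mat_mul_def)

lemma is_inverse_sym: "is_inverse p A B \<longleftrightarrow> is_inverse p B A"
  unfolding is_inverse_def by blast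

lemma is_inverse_cong:
  assumes "\<And>i j. i < p \<Longrightarrow> j < p \<Longrightarrow> A i j = A' i j"
  shows "is_inverse p A B \<longleftrightarrow> is_inverse p A' B"
  using assms by (simp add: is_inverse_def mat_mul_def)

lemma is_inverse_cancel_left:
  assumes "is_inverse p A B" "l < p"
  shows "mat_mul p (mat_mul p A B) C l j = C l j"
proof -
  have "mat_mul p (mat_mul p A B) C l j = mat_mul p (\<lambda>i k. if i = k then 1 else 0) C l j"
    using assms by (intro mat_mul_cong) (simp_all add: is_inverse_def)
  also have "\<dots> = C l j"
    using assms(2) by (rule mat_mul_delta_left)
  finally show ?thesis .
qed

lemma is_inverse_cancel_right:
  assumes "is_inverse p A B" "j < p"
  shows "mat_mul p C (mat_mul p A B) l j = C l j"
proof -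
  have "mat_mul p C (mat_mul p A B) l j = mat_mul p C (\<lambda>k j. if k = j then 1 else 0) l j"
    using assms by (intro mat_mul_cong) (simp_all add: is_inverse_def)
  also have "\<dots> = C l j"
    using assms(2) by (rule mat_mul_delta_right)
  finally show ?thesis .
qed

lemma is_inverse_unique:
  assumes "is_inverse p A B" "is_inverse p A B'" "i < p" "j < p"
  shows "B i j = B' i j"
proof -
  have "B i j = mat_mul p B (mat_mul p A B') i j"
    using assms(2,4) by (simp add: is_inverse_cancel_right)
  also have "\<dots> = mat_mul p (mat_mul p B A) B' i j"
    by (simp add: mat_mul_assoc)
  also have "\<dots> = B' i j"
    using assms(1,3) by (simp add: is_inverse_cancel_left is_inverse_sym)
  finally show ?thesis .
qed

lemma is_inverse_inv_p: "invertible_p p A \<Longrightarrow> is_inverse p A (inv_p p A)"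
  unfolding invertible_p_iff_is_inverse inv_p_eq_Eps by (erule someI_ex)

lemma inv_p_eqI: "is_inverse p A B \<Longrightarrow> i < p \<Longrightarrow> j < p \<Longrightarrow> inv_p p A i j = B i j"
  by (rule is_inverse_unique[OF is_inverse_inv_p]) (auto simp: invertible_p_iff_is_inverse)

lemma inv_p_cong:
  assumes "\<And>i j. i < p \<Longrightarrow> j < p \<Longrightarrow> A i j = A' i j"
  shows "inv_p p A = inv_p p A'"
  using is_inverse_cong[OF assms] by (simp add: inv_p_eq_Eps)

lemma is_inverse_of_real:
  "is_inverse p A B \<Longrightarrow>
    is_inverse p (\<lambda>i j. of_real (A i j)) (\<lambda>i j. of_real (B i j) :: 'a::{real_algebra_1,comm_ring_1})"
  by (simp add: is_inverse_def mat_mul_of_real)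

lemma is_inverse_mat_mul:
  assumes "is_inverse p A Ai" "is_inverse p g h"
  shows "is_inverse p (mat_mul p A g) (mat_mul p h Ai)"
  unfolding is_inverse_def
proof (intro allI impI conjI)
  fix i j assume ij: "i < p" "j < p"
  have "mat_mul p (mat_mul p A g) (mat_mul p h Ai) i j = mat_mul p A (mat_mul p (mat_mul p g h) Ai) i j"
    by (simp add: mat_mul_assoc)
  also have "\<dots> = mat_mul p A Ai i j"
    using assms(2) by (intro mat_mul_cong) (simp_all add: is_inverse_cancel_left)
  finally show "mat_mul p (mat_mul p A g) (mat_mul p h Ai) i j = (if i = j then 1 else 0)"
    using assms(1) ij by (simp add: is_inverse_def)
  have "mat_mul p (mat_mul p h Ai) (mat_mul p A g) i j = mat_mul p h (mat_mul p (mat_mul p Ai A) g) i j"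
    by (simp add: mat_mul_assoc)
  also have "\<dots> = mat_mul p h g i j"
    using assms(1) by (intro mat_mul_cong) (simp_all add: is_inverse_cancel_left is_inverse_sym)
  finally show "mat_mul p (mat_mul p h Ai) (mat_mul p A g) i j = (if i = j then 1 else 0)"
    using assms(2) ij by (simp add: is_inverse_def)
qed

lemma is_inverse_rank_one_update:
  fixes A Ai :: "nat \<Rightarrow> nat \<Rightarrow> 'a::field"
  assumes inv: "is_inverse p A Ai" and ab: "a < p" "b < p" and nz: "1 + t * Ai b a \<noteq> 0"
  shows "is_inverse p (\<lambda>i j. A i j + (if i = a \<and> j = b then t else 0))
                 (\<lambda>i j. Ai i j - t / (1 + t * Ai b a) * Ai i a * Ai b j)"
proof -
  define \<rho> where "\<rho> = t / (1 + t * Ai b a)"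
  have key: "t - \<rho> * (1 + t * Ai b a) = 0"
    unfolding \<rho>_def using nz by simp
  have I: "(\<Sum>k<p. A i k * Ai k j) = (if i = j then 1 else 0)"
     "(\<Sum>k<p. Ai i k * A k j) = (if i = j then 1 else 0)" if "i < p" "j < p" for i j
    using inv that unfolding is_inverse_def mat_mul_def by auto
  show ?thesis unfolding is_inverse_def mat_mul_def \<rho>_def[symmetric]
  proof (intro allI impI conjI)
    fix i j assume ij: "i < p" "j < p"
    have "(\<Sum>k<p. (A i k + (if i = a \<and> k = b then t else 0)) * (Ai k j - \<rho> * Ai k a * Ai b j))
        = (\<Sum>k<p. A i k * Ai k j - \<rho> * Ai b j * (A i k * Ai k a)
            + (if i = a \<and> k = b then t * (Ai k j - \<rho> * Ai k a * Ai b j) else 0))"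
      by (intro sum.cong) (simp_all add: algebra_simps)
    also have "\<dots> = (\<Sum>k<p. A i k * Ai k j) - \<rho> * Ai b j * (\<Sum>k<p. A i k * Ai k a)
          + (\<Sum>k<p. if i = a \<and> k = b then t * (Ai k j - \<rho> * Ai k a * Ai b j) else 0)"
      by (simp only: sum.distrib sum_subtractf sum_distrib_left)
    also have "\<dots> = (if i = j then 1 else 0) + (if i = a then Ai b j * (t - \<rho> * (1 + t * Ai b a)) else 0)"
      using I ij ab by (simp add: algebra_simps)
    finally show "(\<Sum>k<p. (A i k + (if i = a \<and> k = b then t else 0)) * (Ai k j - \<rho> * Ai k a * Ai b j))
        = (if i = j then 1 else 0)"
      by (simp add: key)
  next
    fix i j assume ij: "i < p" "j < p"
    have "(\<Sum>k<p. (Ai i k - \<rho> * Ai i a * Ai b k) * (A k j + (if k = a \<and> j = b then t else 0)))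
        = (\<Sum>k<p. Ai i k * A k j - \<rho> * Ai i a * (Ai b k * A k j)
            + (if k = a \<and> j = b then (Ai i k - \<rho> * Ai i a * Ai b k) * t else 0))"
      by (intro sum.cong) (simp_all add: algebra_simps)
    also have "\<dots> = (\<Sum>k<p. Ai i k * A k j) - \<rho> * Ai i a * (\<Sum>k<p. Ai b k * A k j)
          + (\<Sum>k<p. if k = a \<and> j = b then (Ai i k - \<rho> * Ai i a * Ai b k) * t else 0)"
      by (simp only: sum.distrib sum_subtractf sum_distrib_left)
    also have "\<dots> = (if i = j then 1 else 0) + (if j = b then Ai i a * (t - \<rho> * (1 + t * Ai b a)) else 0)"
      using I ij ab by (simp add: algebra_simps)
    finally show "(\<Sum>k<p. (Ai i k - \<rho> * Ai i a * Ai b k) * (A k j + (if k = a \<and> j = b then t else 0)))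
        = (if i = j then 1 else 0)"
      by (simp add: key)
  qed
qed

lemma invertible_p_if_injective:
  assumes inj: "\<And>v. \<forall>i<p. (\<Sum>j<p. A i j * v j) = 0 \<Longrightarrow> \<forall>j<p. v j = 0"
  shows "invertible_p p A"
proof -
  define Am where "Am = mat p p (\<lambda>(i, j). A i j)"
  have car: "Am \<in> carrier_mat p p"
    unfolding Am_def by simp
  have "det Am \<noteq> 0"
  proof
    assume "det Am = 0"
    then obtain v where v: "v \<in> carrier_vec p" "v \<noteq> 0\<^sub>v p" "Am *\<^sub>v v = 0\<^sub>v p"
      using det_0_iff_vec_prod_zero[OF car] by blast
    have "(\<Sum>j<p. A i j * v $ j) = (Am *\<^sub>v v) $ i" if "i < p" for i
      using that v(1) unfolding Am_def
      by (auto simp: mult_mat_vec_def scalar_prod_def row_def intro!: sum.cong)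
    with v(3) have "\<forall>i<p. (\<Sum>j<p. A i j * v $ j) = 0"
      by simp
    then have "\<forall>j<p. v $ j = 0"
      by (rule inj)
    with v(1) have "v = 0\<^sub>v p"
      by auto
    with v(2) show False ..
  qed
  then have "Am \<in> Units (ring_mat TYPE(real) p ())"
    by (rule det_non_zero_imp_unit[OF car])
  then obtain Bm where Bm: "Bm \<in> carrier_mat p p" "Am * Bm = 1\<^sub>m p" "Bm * Am = 1\<^sub>m p"
    unfolding Units_def by (auto simp: ring_mat_def)
  have "is_inverse p A (\<lambda>i j. Bm $$ (i, j))"
    unfolding is_inverse_def
  proof (intro allI impI conjI)
    fix i j assume ij: "i < p" "j < p"
    have "mat_mul p A (\<lambda>i j. Bm $$ (i, j)) i j = (Am * Bm) $$ (i, j)"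
      using ij Bm(1) unfolding Am_def mat_mul_def
      by (auto simp: scalar_prod_def row_def col_def intro!: sum.cong)
    then show "mat_mul p A (\<lambda>i j. Bm $$ (i, j)) i j = (if i = j then 1 else 0)"
      using Bm(2) ij by simp
    have "mat_mul p (\<lambda>i j. Bm $$ (i, j)) A i j = (Bm * Am) $$ (i, j)"
      using ij Bm(1) unfolding Am_def mat_mul_def
      by (auto simp: scalar_prod_def row_def col_def intro!: sum.cong)
    then show "mat_mul p (\<lambda>i j. Bm $$ (i, j)) A i j = (if i = j then 1 else 0)"
      using Bm(3) ij by simp
  qed
  then show ?thesis
    unfolding invertible_p_iff_is_inverse by blast
qed

section \<open>The matrices A and C\<close>

definition Amat :: "nat \<Rightarrow> rmat \<Rightarrow> rmat" where
  "Amat p X = (\<lambda>a b. X a b - X (p + a) b)"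

definition Wmat :: "nat \<Rightarrow> nat \<Rightarrow> rmat \<Rightarrow> cmat" where
  "Wmat p r X = (\<lambda>l b. Complex (X (2*p + l) b) (X (2*p + r + l) b))"

definition Bmat :: "nat \<Rightarrow> nat \<Rightarrow> cmat \<Rightarrow> rmat \<Rightarrow> cmat" where
  "Bmat p r M X = (\<lambda>l b. Wmat p r X l b + (\<Sum>q<r. M l q * cnj (Wmat p r X q b)))"

text \<open>Cmat is S Bmat, with S = (I_{r-1} | m) as in Smat below.\<close>

definition Cmat :: "nat \<Rightarrow> nat \<Rightarrow> cmat \<Rightarrow> rmat \<Rightarrow> cmat" where
  "Cmat p r M X = (\<lambda>a b. Bmat p r M X a b + M a (r - 1) * Bmat p r M X (r - 1) b)"

lemma Phi_hat_eq:
  "Phi_hat p r M X k j = (if k < r - 1 \<and> j < p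
     then mat_mul p (Cmat p r M X) (\<lambda>q j. of_real (inv_p p (Amat p X) q j)) k j else 0)"
  unfolding Phi_hat_def Amat_def Wmat_def Bmat_def Cmat_def mat_mul_def Let_def ..

lemma Upn_mono:
  assumes "n \<le> m"
  shows "Upn p n \<subseteq> Upn p m"
proof
  fix X assume X: "X \<in> Upn p n"
  then have zero: "X i j = 0" if "p + n \<le> i \<or> p \<le> j" for i j
    using that unfolding Upn_def by blast
  have "(\<Sum>i\<in>{p..<p + m}. (\<Sum>j<p. X i j * v j)\<^sup>2) = (\<Sum>i\<in>{p..<p + n}. (\<Sum>j<p. X i j * v j)\<^sup>2)"
    for v :: "nat \<Rightarrow> real"
    using assms by (intro sum.mono_neutral_right) (auto simp: zero)
  then show "X \<in> Upn p m"
    using X assms unfolding Upn_def by (auto simp: zero)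
qed

lemma Upn_invertible_Amat:
  assumes X: "X \<in> Upn p n" and pn: "p \<le> n"
  shows "invertible_p p (Amat p X)"
proof (rule invertible_p_if_injective)
  fix v :: "nat \<Rightarrow> real"
  assume Av: "\<forall>i<p. (\<Sum>j<p. Amat p X i j * v j) = 0"
  show "\<forall>j<p. v j = 0"
  proof (rule ccontr)
    assume "\<not> (\<forall>j<p. v j = 0)"
    then have neg: "- (\<Sum>i<p. (\<Sum>j<p. X i j * v j)\<^sup>2) + (\<Sum>i\<in>{p..<p + n}. (\<Sum>j<p. X i j * v j)\<^sup>2) < 0"
      using X unfolding Upn_def by blast
    have "(\<Sum>j<p. X i j * v j) = (\<Sum>j<p. X (p + i) j * v j)" if "i < p" for i
      using Av that by (simp add: Amat_def left_diff_distrib sum_subtractf)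
    then have "(\<Sum>i<p. (\<Sum>j<p. X i j * v j)\<^sup>2) = (\<Sum>i\<in>(+) p ` {..<p}. (\<Sum>j<p. X i j * v j)\<^sup>2)"
      by (simp add: sum.reindex)
    also have "\<dots> \<le> (\<Sum>i\<in>{p..<p + n}. (\<Sum>j<p. X i j * v j)\<^sup>2)"
      using pn by (intro sum_mono2) auto
    finally show False
      using neg by simp
  qed
qed

text \<open>Rows a < r - 1 of S = (I_{r-1} | m) and of the product S M.\<close>

definition Smat :: "nat \<Rightarrow> cmat \<Rightarrow> cmat" where
  "Smat r M a l = of_bool (a = l) + M a (r - 1) * of_bool (r - 1 = l)"

definition SMmat :: "nat \<Rightarrow> cmat \<Rightarrow> cmat" where
  "SMmat r M a l = M a l + M a (r - 1) * M (r - 1) l"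

definition Ccoef :: "nat \<Rightarrow> nat \<Rightarrow> cmat \<Rightarrow> nat \<Rightarrow> nat \<Rightarrow> complex" where
  "Ccoef p r M i a = (if i < 2*p + r
     then Smat r M a (i - 2*p) + SMmat r M a (i - 2*p)
     else \<i> * (Smat r M a (i - (2*p + r)) - SMmat r M a (i - (2*p + r))))"

lemma so_r_diag:
  assumes "M \<in> so_r r" "i < r"
  shows "M i i = 0"
proof -
  have "M i i = - M i i"
    using assms unfolding so_r_def by blast
  then show ?thesis
    by (simp add: complex_eq_iff)
qed

lemma Bmat_expansion:
  assumes "l < r"
  shows "Bmat p r M X l q = (\<Sum>m<r. of_real (X (2*p + m) q) * (of_bool (l = m) + M l m)
            + \<i> * of_real (X (2*p + r + m) q) * (of_bool (l = m) - M l m))"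
proof -
  have W: "Wmat p r X m q = of_real (X (2*p + m) q) + \<i> * of_real (X (2*p + r + m) q)" for m
    by (simp add: Wmat_def Complex_eq)
  have "Bmat p r M X l q = (\<Sum>m<r. (if l = m then Wmat p r X m q else 0) + M l m * cnj (Wmat p r X m q))"
    using assms by (simp add: Bmat_def sum.distrib)
  also have "\<dots> = (\<Sum>m<r. of_real (X (2*p + m) q) * (of_bool (l = m) + M l m)
            + \<i> * of_real (X (2*p + r + m) q) * (of_bool (l = m) - M l m))"
  proof (intro sum.cong refl)
    fix m
    have "cnj (Wmat p r X m q) = of_real (X (2*p + m) q) - \<i> * of_real (X (2*p + r + m) q)"
      by (simp add: W)
    then show "(if l = m then Wmat p r X m q else 0) + M l m * cnj (Wmat p r X m q)
        = of_real (X (2*p + m) q) * (of_bool (l = m) + M l m)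
          + \<i> * of_real (X (2*p + r + m) q) * (of_bool (l = m) - M l m)"
      by (cases "l = m") (simp_all add: W ring_distribs)
  qed
  finally show ?thesis .
qed

lemma Cmat_expansion_Re_Im:
  assumes "a < r"
  shows "Cmat p r M X a q = (\<Sum>m<r. of_real (X (2*p + m) q) * (Smat r M a m + SMmat r M a m)
            + \<i> * of_real (X (2*p + r + m) q) * (Smat r M a m - SMmat r M a m))"
proof -
  define T where "T l m = of_real (X (2*p + m) q) * (of_bool (l = m) + M l m)
      + \<i> * of_real (X (2*p + r + m) q) * (of_bool (l = m) - M l m)" for l m
  have "r - 1 < r"
    using assms by simp
  then have "Cmat p r M X a q = (\<Sum>m<r. T a m) + M a (r - 1) * (\<Sum>m<r. T (r - 1) m)"
    using assms by (simp add: Cmat_def Bmat_expansion T_def)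
  also have "\<dots> = (\<Sum>m<r. T a m + M a (r - 1) * T (r - 1) m)"
    by (simp add: sum.distrib sum_distrib_left)
  also have "\<dots> = (\<Sum>m<r. of_real (X (2*p + m) q) * (Smat r M a m + SMmat r M a m)
            + \<i> * of_real (X (2*p + r + m) q) * (Smat r M a m - SMmat r M a m))"
    by (intro sum.cong refl) (simp add: T_def Smat_def SMmat_def algebra_simps)
  finally show ?thesis .
qed

lemma sum_split_Re_Im_rows:
  fixes p r :: nat
  shows "(\<Sum>i\<in>{2*p..<2*p + 2*r}. f i) = (\<Sum>m<r. f (2*p + m)) + (\<Sum>m<r. f (2*p + r + m))"
proof -
  have "(\<Sum>i\<in>{2*p..<2*p + 2*r}. f i) = (\<Sum>i\<in>{2*p..<2*p + r}. f i) + (\<Sum>i\<in>{2*p + r..<2*p + 2*r}. f i)"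
    by (simp add: sum.atLeastLessThan_concat)
  also have "\<dots> = (\<Sum>m<r. f (2*p + m)) + (\<Sum>m<r. f (2*p + r + m))"
    by (simp add: sum.atLeastLessThan_shift_0[of _ "2*p"] sum.atLeastLessThan_shift_0[of _ "2*p + r"]
        lessThan_atLeast0)
  finally show ?thesis .
qed

lemma Ccoef_Re_row: "m < r \<Longrightarrow> Ccoef p r M (2*p + m) a = Smat r M a m + SMmat r M a m"
  by (simp add: Ccoef_def)

lemma Ccoef_Im_row: "Ccoef p r M (2*p + r + m) a = \<i> * (Smat r M a m - SMmat r M a m)"
  by (simp add: Ccoef_def)

lemma Cmat_eq_sum_Ccoef_all_rows:
  assumes "a < r"
  shows "Cmat p r M X a q = (\<Sum>i\<in>{2*p..<2*p + 2*r}. of_real (X i q) * Ccoef p r M i a)"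
proof -
  have "(\<Sum>i\<in>{2*p..<2*p + 2*r}. of_real (X i q) * Ccoef p r M i a)
      = (\<Sum>m<r. of_real (X (2*p + m) q) * (Smat r M a m + SMmat r M a m))
        + (\<Sum>m<r. of_real (X (2*p + r + m) q) * (\<i> * (Smat r M a m - SMmat r M a m)))"
    unfolding sum_split_Re_Im_rows
    by (intro arg_cong2[where f="(+)"] sum.cong refl) (simp_all add: Ccoef_Re_row Ccoef_Im_row)
  also have "\<dots> = Cmat p r M X a q"
    using assms by (simp add: Cmat_expansion_Re_Im sum.distrib mult.left_commute mult.assoc)
  finally show ?thesis ..
qed

lemma Ccoef_last_row:
  assumes "M \<in> so_r r" "a < r - 1"
  shows "Ccoef p r M (2*p + 2*r - 1) a = 0"
  using assms so_r_diag[OF assms(1), of "r - 1"]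
  by (simp add: Ccoef_def Smat_def SMmat_def)

lemma Cmat_eq_sum_Ccoef:
  assumes "M \<in> so_r r" "a < r - 1"
  shows "Cmat p r M X a q = (\<Sum>i\<in>{2*p..<2*p + 2*r - 1}. of_real (X i q) * Ccoef p r M i a)"
proof -
  have "{2*p..<2*p + 2*r} = insert (2*p + 2*r - 1) {2*p..<2*p + 2*r - 1}"
    using assms(2) by auto
  then show ?thesis
    using assms Ccoef_last_row[OF assms] by (simp add: Cmat_eq_sum_Ccoef_all_rows)
qed

lemma sum_Smat_SMmat:
  assumes M: "M \<in> so_r r" and k: "k < r - 1" and k': "k' < r"
  shows "(\<Sum>m<r. Smat r M k m * SMmat r M k' m) = M k' k"
proof -
  have r: "k < r" "r - 1 < r" "k \<noteq> r - 1"
    using k by auto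
  have "(\<Sum>m<r. Smat r M k m * SMmat r M k' m)
      = (\<Sum>m<r. of_bool (k = m) * SMmat r M k' m)
        + M k (r - 1) * (\<Sum>m<r. of_bool (r - 1 = m) * SMmat r M k' m)"
    by (simp only: Smat_def distrib_right mult.assoc sum.distrib sum_distrib_left)
  also have "\<dots> = SMmat r M k' k + M k (r - 1) * SMmat r M k' (r - 1)"
    using r by simp
  also have "\<dots> = M k' k"
  proof -
    have "M (r - 1) k = - M k (r - 1)"
      using M r unfolding so_r_def by blast
    then show ?thesis
      using so_r_diag[OF M r(2)] unfolding SMmat_def by (simp add: algebra_simps)
  qed
  finally show ?thesis .
qed

lemma Ccoef_orthogonal:
  assumes M: "M \<in> so_r r" and k: "k < r - 1" and k': "k' < r - 1"
  shows "(\<Sum>i\<in>{2*p..<2*p + 2*r - 1}. Ccoef p r M i k * Ccoef p r M i k') = 0"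
proof -
  let ?S = "Smat r M" and ?Q = "SMmat r M"
  have "{2*p..<2*p + 2*r} = insert (2*p + 2*r - 1) {2*p..<2*p + 2*r - 1}"
    using k by auto
  then have "(\<Sum>i\<in>{2*p..<2*p + 2*r - 1}. Ccoef p r M i k * Ccoef p r M i k')
      = (\<Sum>i\<in>{2*p..<2*p + 2*r}. Ccoef p r M i k * Ccoef p r M i k')"
    using Ccoef_last_row[OF M k] by simp
  also have "\<dots> = (\<Sum>m<r. (?S k m + ?Q k m) * (?S k' m + ?Q k' m)
                        + (\<i> * (?S k m - ?Q k m)) * (\<i> * (?S k' m - ?Q k' m)))"
    unfolding sum_split_Re_Im_rows sum.distrib[symmetric]
    by (intro sum.cong refl) (simp add: Ccoef_Re_row Ccoef_Im_row)
  also have "\<dots> = (\<Sum>m<r. 2 * (?S k m * ?Q k' m) + 2 * (?S k' m * ?Q k m))"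
    by (intro sum.cong refl) (simp add: algebra_simps)
  also have "\<dots> = 2 * (\<Sum>m<r. ?S k m * ?Q k' m) + 2 * (\<Sum>m<r. ?S k' m * ?Q k m)"
    by (simp only: sum.distrib sum_distrib_left)
  also have "\<dots> = 2 * (M k' k + M k k')"
    using M k k' by (simp add: sum_Smat_SMmat)
  also have "\<dots> = 0"
  proof -
    have "k < r" "k' < r"
      using k k' by auto
    then have "M k k' = - M k' k"
      using M unfolding so_r_def by blast
    then show ?thesis
      by simp
  qed
  finally show ?thesis .
qed

lemma Phi_hat_independent_of_last_row:
  assumes M: "M \<in> so_r r" and XY: "\<And>i j. i \<noteq> 2*p + 2*r - 1 \<Longrightarrow> X i j = Y i j"
  shows "Phi_hat p r M X = Phi_hat p r M Y"
proof (intro ext)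
  fix k j
  show "Phi_hat p r M X k j = Phi_hat p r M Y k j"
  proof (cases "k < r - 1 \<and> j < p")
    case False
    then show ?thesis
      by (simp only: Phi_hat_eq if_False)
  next
    case True
    have "i \<noteq> 2*p + 2*r - 1" "p + i \<noteq> 2*p + 2*r - 1" if "i < p" for i
      using True that by linarith+
    then have "inv_p p (Amat p X) = inv_p p (Amat p Y)"
      by (intro inv_p_cong) (simp add: Amat_def XY)
    moreover have "Cmat p r M X k q = Cmat p r M Y k q" for q
      using True by (simp add: Cmat_eq_sum_Ccoef[OF M] XY)
    ultimately show ?thesis
      by (simp add: Phi_hat_eq mat_mul_def)
  qed
qed

lemma Amat_rmul: "v < p \<Longrightarrow> Amat p (rmul p X g) u v = mat_mul p (Amat p X) g u v"
  by (simp add: Amat_def rmul_def mat_mul_def sum_subtractf algebra_simps)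

lemma Cmat_rmul:
  assumes "a < r" "q < p"
  shows "Cmat p r M (rmul p X g) a q = mat_mul p (Cmat p r M X) (\<lambda>m q. of_real (g m q)) a q"
proof -
  have "Cmat p r M (rmul p X g) a q
      = (\<Sum>i\<in>{2*p..<2*p + 2*r}. \<Sum>m<p. of_real (X i m) * Ccoef p r M i a * of_real (g m q))"
    using assms by (simp add: Cmat_eq_sum_Ccoef_all_rows rmul_def sum_distrib_left sum_distrib_right mult_ac)
  also have "\<dots> = (\<Sum>m<p. \<Sum>i\<in>{2*p..<2*p + 2*r}. of_real (X i m) * Ccoef p r M i a * of_real (g m q))"
    by (rule sum.swap)
  also have "\<dots> = mat_mul p (Cmat p r M X) (\<lambda>m q. of_real (g m q)) a q"
    using assms by (simp add: Cmat_eq_sum_Ccoef_all_rows mat_mul_def sum_distrib_right)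
  finally show ?thesis .
qed

lemma Phi_hat_rmul:
  assumes inv: "is_inverse p (Amat p X) Ai" and g: "is_inverse p g h"
  shows "Phi_hat p r M (rmul p X g) = Phi_hat p r M X"
proof (intro ext)
  fix k j
  let ?R = "\<lambda>A i j. complex_of_real (A i j)"
  show "Phi_hat p r M (rmul p X g) k j = Phi_hat p r M X k j"
  proof (cases "k < r - 1 \<and> j < p")
    case False
    then show ?thesis
      by (simp only: Phi_hat_eq if_False)
  next
    case True
    then have "k < r"
      by arith
    have inv': "is_inverse p (Amat p (rmul p X g)) (mat_mul p h Ai)"
      using is_inverse_mat_mul[OF inv g] by (rule iffD1[OF is_inverse_cong, rotated]) (simp add: Amat_rmul)
    have "mat_mul p (Cmat p r M (rmul p X g)) (?R (inv_p p (Amat p (rmul p X g)))) k j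
        = mat_mul p (mat_mul p (Cmat p r M X) (?R g)) (mat_mul p (?R h) (?R Ai)) k j"
      using True
      by (intro mat_mul_cong) (simp_all add: Cmat_rmul[OF \<open>k < r\<close>] inv_p_eqI[OF inv'] mat_mul_of_real)
    also have "\<dots> = mat_mul p (Cmat p r M X) (mat_mul p (mat_mul p (?R g) (?R h)) (?R Ai)) k j"
      by (simp add: mat_mul_assoc)
    also have "\<dots> = mat_mul p (Cmat p r M X) (?R (inv_p p (Amat p X))) k j"
      using True
      by (intro mat_mul_cong) (simp_all add: is_inverse_cancel_left[OF is_inverse_of_real[OF g]] inv_p_eqI[OF inv])
    finally show ?thesis
      by (simp add: Phi_hat_eq)
  qed
qed

section \<open>Partial derivatives along coordinate lines\<close>

lemma coord_shift_apply: "coord_shift X i b t i' q = X i' q + (if i' = i \<and> q = b then t else 0)"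
  by (simp add: coord_shift_def)

lemma coord_shift_coord_shift: "coord_shift (coord_shift X i b t) i b u = coord_shift X i b (t + u)"
  by (simp add: coord_shift_def fun_eq_iff)

lemma pdiff_coord_line:
  fixes \<phi> :: "rmat \<Rightarrow> complex"
  assumes e: "e > 0"
    and line: "\<And>t. t \<in> ball 0 e \<Longrightarrow> \<phi> (coord_shift X i b t) = f t"
    and f': "\<And>t. t \<in> ball 0 e \<Longrightarrow> (f has_vector_derivative f' t) (at t)"
    and f'': "(f' has_vector_derivative f'') (at 0)"
  shows "pdiff \<phi> i b X = f' 0" "pdiff (pdiff \<phi> i b) i b X = f''"
    "(\<lambda>t. \<phi> (coord_shift X i b t)) differentiable (at 0)"
    "(\<lambda>t. pdiff \<phi> i b (coord_shift X i b t)) differentiable (at 0)"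
proof -
  have \<phi>': "((\<lambda>t. \<phi> (coord_shift X i b t)) has_vector_derivative f' t) (at t)" if "t \<in> ball 0 e" for t
    by (rule has_vector_derivative_transform_within_open[OF f'[OF that] open_ball that]) (simp add: line)
  have pdiff_line: "pdiff \<phi> i b (coord_shift X i b t) = f' t" if "t \<in> ball 0 e" for t
  proof -
    have "((\<lambda>u. t + u) has_vector_derivative 1) (at 0)"
      by (auto intro!: derivative_eq_intros)
    from vector_diff_chain_at[OF this]
    have "((\<lambda>u. \<phi> (coord_shift X i b (t + u))) has_vector_derivative f' t) (at 0)"
      using \<phi>'[OF that] by (simp add: o_def)
    then show ?thesis
      unfolding pdiff_def coord_shift_coord_shift by (rule vector_derivative_at)
  qed
  have 0: "(0::real) \<in> ball 0 e"
    using e by simp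
  show "pdiff \<phi> i b X = f' 0"
    using pdiff_line[OF 0] by (simp add: coord_shift_def)
  have d: "((\<lambda>t. pdiff \<phi> i b (coord_shift X i b t)) has_vector_derivative f'') (at 0)"
    by (rule has_vector_derivative_transform_within_open[OF f'' open_ball 0]) (simp add: pdiff_line)
  then show "pdiff (pdiff \<phi> i b) i b X = f''"
    unfolding pdiff_def[of "pdiff \<phi> i b"] by (rule vector_derivative_at)
  show "(\<lambda>t. pdiff \<phi> i b (coord_shift X i b t)) differentiable (at 0)"
    using d by (auto simp: differentiable_def has_vector_derivative_def)
  show "(\<lambda>t. \<phi> (coord_shift X i b t)) differentiable (at 0)"
    using \<phi>'[OF 0] by (auto simp: differentiable_def has_vector_derivative_def)
qed

lemma has_vector_derivative_moebius:
  fixes \<sigma> \<beta> t :: real and \<alpha> \<gamma> :: complex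
  assumes "\<sigma> + t * \<beta> \<noteq> 0"
  shows "((\<lambda>t. \<alpha> + \<gamma> * of_real (t / (\<sigma> + t * \<beta>))) has_vector_derivative
           \<gamma> * of_real (\<sigma> / (\<sigma> + t * \<beta>)\<^sup>2)) (at t)"
proof -
  have "((\<lambda>t. t / (\<sigma> + t * \<beta>)) has_real_derivative \<sigma> / (\<sigma> + t * \<beta>)\<^sup>2) (at t)"
    using assms by (auto intro!: derivative_eq_intros simp: power2_eq_square field_simps)
  then show ?thesis
    by (intro has_vector_derivative_add[of "\<lambda>t. \<alpha>" 0, simplified] has_vector_derivative_mult_right
        has_vector_derivative_of_real)
qed

lemma has_vector_derivative_moebius_derivative:
  fixes \<sigma> \<beta> :: real and \<gamma> :: complex
  assumes "\<sigma> \<noteq> 0"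
  shows "((\<lambda>t. \<gamma> * of_real (\<sigma> / (\<sigma> + t * \<beta>)\<^sup>2)) has_vector_derivative
           \<gamma> * of_real (- 2 * \<beta> / \<sigma>\<^sup>2)) (at 0)"
proof -
  have "((\<lambda>t. \<sigma> / (\<sigma> + t * \<beta>)\<^sup>2) has_real_derivative - 2 * \<beta> / \<sigma>\<^sup>2) (at 0)"
    using assms by (auto intro!: derivative_eq_intros simp: power2_eq_square field_simps)
  then show ?thesis
    by (intro has_vector_derivative_mult_right has_vector_derivative_of_real)
qed

lemma Amat_coord_shift_W_row:
  "2*p \<le> i \<Longrightarrow> u < p \<Longrightarrow> Amat p (coord_shift X i b t) u v = Amat p X u v"
  by (simp add: Amat_def coord_shift_apply)

lemma Amat_coord_shift_A_row:
  assumes "i < 2*p" "u < p"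
  shows "Amat p (coord_shift X i b t) u v
       = Amat p X u v + (if u = i mod p \<and> v = b then - msign p i * t else 0)"
proof (cases "i < p")
  case True
  then show ?thesis
    using assms by (auto simp: Amat_def coord_shift_apply msign_def)
next
  case False
  then have "i mod p = i - p"
    using assms(1) by (simp add: le_mod_geq)
  then show ?thesis
    using assms False by (auto simp: Amat_def coord_shift_apply msign_def)
qed

lemma Cmat_coord_shift_A_row: "i < 2*p \<Longrightarrow> Cmat p r M (coord_shift X i b t) = Cmat p r M X"
  by (simp add: Cmat_def Bmat_def Wmat_def coord_shift_apply)

lemma Cmat_coord_shift_W_row:
  assumes "a < r" "i \<in> {2*p..<2*p + 2*r}"
  shows "Cmat p r M (coord_shift X i b t) a q
       = Cmat p r M X a q + (if q = b then of_real t * Ccoef p r M i a else 0)"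
proof -
  have "Cmat p r M (coord_shift X i b t) a q
      = (\<Sum>i'\<in>{2*p..<2*p + 2*r}. of_real (X i' q) * Ccoef p r M i' a
          + (if q = b then (if i' = i then of_real t * Ccoef p r M i' a else 0) else 0))"
    unfolding Cmat_eq_sum_Ccoef_all_rows[OF assms(1)]
    by (intro sum.cong refl) (simp add: coord_shift_apply distrib_right)
  then show ?thesis
    using assms by (simp add: sum.distrib Cmat_eq_sum_Ccoef_all_rows)
qed

lemma Phi_hat_coord_shift_W_row:
  assumes i: "i \<in> {2*p..<2*p + 2*r}" and kj: "k < r - 1" "j < p" and b: "b < p"
  shows "Phi_hat p r M (coord_shift X i b t) k j
       = Phi_hat p r M X k j + of_real t * (Ccoef p r M i k * of_real (inv_p p (Amat p X) b j))"
proof -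
  let ?Ai = "\<lambda>q j. complex_of_real (inv_p p (Amat p X) q j)"
  have "inv_p p (Amat p (coord_shift X i b t)) = inv_p p (Amat p X)"
    by (rule inv_p_cong) (use i in \<open>simp add: Amat_coord_shift_W_row\<close>)
  moreover have "mat_mul p (Cmat p r M (coord_shift X i b t)) ?Ai k j
      = (\<Sum>q<p. Cmat p r M X k q * ?Ai q j + (if q = b then of_real t * Ccoef p r M i k * ?Ai q j else 0))"
    unfolding mat_mul_def using i kj by (intro sum.cong refl) (simp add: Cmat_coord_shift_W_row distrib_right)
  ultimately show ?thesis
    using kj b by (simp add: Phi_hat_eq sum.distrib mat_mul_def mult.assoc)
qed

lemma inv_p_Amat_coord_shift_A_row:
  assumes inv: "is_inverse p (Amat p X) Ai" and i: "i < 2*p" and b: "b < p"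
    and nz: "- msign p i + t * Ai b (i mod p) \<noteq> 0" and qj: "q < p" "j < p"
  shows "inv_p p (Amat p (coord_shift X i b t)) q j
       = Ai q j - t / (- msign p i + t * Ai b (i mod p)) * Ai q (i mod p) * Ai b j"
proof -
  define a where "a = i mod p"
  define \<sigma> where "\<sigma> = - msign p i"
  have a: "a < p"
    using b unfolding a_def by simp
  have \<sigma>: "\<sigma> * \<sigma> = 1"
    unfolding \<sigma>_def msign_def by simp
  have one: "1 + \<sigma> * t * Ai b a = \<sigma> * (\<sigma> + t * Ai b a)"
    using \<sigma> by (simp add: algebra_simps)
  with nz \<sigma> have nz': "1 + \<sigma> * t * Ai b a \<noteq> 0"
    unfolding \<sigma>_def a_def by auto
  have \<rho>: "\<sigma> * t / (1 + \<sigma> * t * Ai b a) = t / (\<sigma> + t * Ai b a)"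
    unfolding one using \<sigma> by (metis mult_divide_mult_cancel_left_if mult_cancel_right1 one_neq_zero)
  have "is_inverse p (\<lambda>u v. Amat p X u v + (if u = a \<and> v = b then \<sigma> * t else 0))
          (\<lambda>u v. Ai u v - t / (\<sigma> + t * Ai b a) * Ai u a * Ai b v)"
    using is_inverse_rank_one_update[OF inv a b nz'] unfolding \<rho> .
  then have "is_inverse p (Amat p (coord_shift X i b t))
      (\<lambda>u v. Ai u v - t / (\<sigma> + t * Ai b a) * Ai u a * Ai b v)"
    by (rule iffD1[OF is_inverse_cong, rotated]) (simp add: Amat_coord_shift_A_row i a_def \<sigma>_def)
  then show ?thesis
    using qj unfolding a_def \<sigma>_def by (simp add: inv_p_eqI)
qed

lemma Phi_hat_coord_shift_A_row:
  assumes inv: "is_inverse p (Amat p X) Ai" and i: "i < 2*p" and b: "b < p"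
    and kj: "k < r - 1" "j < p" and nz: "- msign p i + t * Ai b (i mod p) \<noteq> 0"
  shows "Phi_hat p r M (coord_shift X i b t) k j = Phi_hat p r M X k j
     - mat_mul p (Cmat p r M X) (\<lambda>q j. of_real (Ai q j)) k (i mod p) * of_real (Ai b j)
       * of_real (t / (- msign p i + t * Ai b (i mod p)))"
proof -
  define \<rho> where "\<rho> = t / (- msign p i + t * Ai b (i mod p))"
  let ?Ai = "\<lambda>q j. complex_of_real (Ai q j)"
  have "mat_mul p (Cmat p r M (coord_shift X i b t))
          (\<lambda>q j. of_real (inv_p p (Amat p (coord_shift X i b t)) q j)) k j
      = (\<Sum>q<p. Cmat p r M X k q * ?Ai q j - Cmat p r M X k q * ?Ai q (i mod p) * ?Ai b j * of_real \<rho>)"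
    unfolding mat_mul_def using i
    by (intro sum.cong refl)
       (simp add: Cmat_coord_shift_A_row inv_p_Amat_coord_shift_A_row[OF inv i b nz _ kj(2)] \<rho>_def
         algebra_simps)
  also have "\<dots> = mat_mul p (Cmat p r M X) ?Ai k j
      - mat_mul p (Cmat p r M X) ?Ai k (i mod p) * ?Ai b j * of_real \<rho>"
    by (simp add: mat_mul_def sum_subtractf sum_distrib_right)
  moreover have "mat_mul p (Cmat p r M X) (\<lambda>q j. of_real (inv_p p (Amat p X) q j)) k j
      = mat_mul p (Cmat p r M X) ?Ai k j"
    using kj by (intro mat_mul_cong) (simp_all add: inv_p_eqI[OF inv])
  ultimately show ?thesis
    using kj unfolding Phi_hat_eq \<rho>_def by simp
qed

lemma pdiff_Phi_hat_W_row:
  assumes i: "i \<in> {2*p..<2*p + 2*r}" and b: "b < p" and kj: "k < r - 1" "j < p"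
  shows "pdiff (\<lambda>Y. Phi_hat p r M Y k j) i b X = Ccoef p r M i k * of_real (inv_p p (Amat p X) b j)"
    "pdiff (pdiff (\<lambda>Y. Phi_hat p r M Y k j) i b) i b X = 0"
    "(\<lambda>t. Phi_hat p r M (coord_shift X i b t) k j) differentiable (at 0)"
    "(\<lambda>t. pdiff (\<lambda>Y. Phi_hat p r M Y k j) i b (coord_shift X i b t)) differentiable (at 0)"
proof -
  define c where "c = Ccoef p r M i k * of_real (inv_p p (Amat p X) b j)"
  have "((\<lambda>t. Phi_hat p r M X k j + of_real t * c) has_vector_derivative c) (at t)" for t
    by (auto intro!: derivative_eq_intros)
  then show "pdiff (\<lambda>Y. Phi_hat p r M Y k j) i b X = Ccoef p r M i k * of_real (inv_p p (Amat p X) b j)"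
    "pdiff (pdiff (\<lambda>Y. Phi_hat p r M Y k j) i b) i b X = 0"
    "(\<lambda>t. Phi_hat p r M (coord_shift X i b t) k j) differentiable (at 0)"
    "(\<lambda>t. pdiff (\<lambda>Y. Phi_hat p r M Y k j) i b (coord_shift X i b t)) differentiable (at 0)"
    using pdiff_coord_line[of 1 "\<lambda>Y. Phi_hat p r M Y k j" X i b "\<lambda>t. Phi_hat p r M X k j + of_real t * c"
        "\<lambda>_. c" 0]
    by (simp_all add: Phi_hat_coord_shift_W_row[OF i kj b] c_def)
qed

lemma pdiff_Phi_hat_A_row:
  fixes M :: cmat
  assumes inv: "is_inverse p (Amat p X) Ai" and i: "i < 2*p" and b: "b < p" and kj: "k < r - 1" "j < p"
  defines "c \<equiv> mat_mul p (Cmat p r M X) (\<lambda>q j. of_real (Ai q j)) k (i mod p) * of_real (Ai b j)"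
  shows "pdiff (\<lambda>Y. Phi_hat p r M Y k j) i b X = of_real (msign p i) * c"
    "pdiff (pdiff (\<lambda>Y. Phi_hat p r M Y k j) i b) i b X = 2 * c * of_real (Ai b (i mod p))"
    "(\<lambda>t. Phi_hat p r M (coord_shift X i b t) k j) differentiable (at 0)"
    "(\<lambda>t. pdiff (\<lambda>Y. Phi_hat p r M Y k j) i b (coord_shift X i b t)) differentiable (at 0)"
proof -
  define \<sigma> where "\<sigma> = - msign p i"
  define \<beta> where "\<beta> = Ai b (i mod p)"
  define e where "e = 1 / (\<bar>\<beta>\<bar> + 1)"
  have \<sigma>: "\<bar>\<sigma>\<bar> = 1" "\<sigma> \<noteq> 0"
    unfolding \<sigma>_def msign_def by simp_all
  have e: "e > 0"
    unfolding e_def by (simp add: add_pos_nonneg)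
  have nz: "\<sigma> + t * \<beta> \<noteq> 0" if "t \<in> ball 0 e" for t
  proof
    assume "\<sigma> + t * \<beta> = 0"
    then have "\<bar>t\<bar> * \<bar>\<beta>\<bar> = 1"
      using \<sigma>(1) by (metis abs_minus_cancel abs_mult add_eq_0_iff)
    moreover have "\<bar>t\<bar> * (\<bar>\<beta>\<bar> + 1) < 1"
      using that by (simp add: e_def less_divide_eq)
    ultimately show False
      by (simp add: distrib_left)
  qed
  have line: "Phi_hat p r M (coord_shift X i b t) k j
      = Phi_hat p r M X k j + (- c) * of_real (t / (\<sigma> + t * \<beta>))"
    if "t \<in> ball 0 e" for t
    using Phi_hat_coord_shift_A_row[OF inv i b kj, of t M] nz[OF that]
    by (simp add: c_def \<sigma>_def \<beta>_def)
  have "((\<lambda>t. Phi_hat p r M X k j + (- c) * of_real (t / (\<sigma> + t * \<beta>))) has_vector_derivative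
      (- c) * of_real (\<sigma> / (\<sigma> + t * \<beta>)\<^sup>2)) (at t)" if "t \<in> ball 0 e" for t
    using nz[OF that] by (rule has_vector_derivative_moebius)
  note L = pdiff_coord_line[OF e line this has_vector_derivative_moebius_derivative[OF \<sigma>(2)]]
  have "\<sigma> * \<sigma> = 1"
    using \<sigma>(1) by (metis abs_mult_self_eq mult_1_left)
  then show "pdiff (\<lambda>Y. Phi_hat p r M Y k j) i b X = of_real (msign p i) * c"
    "pdiff (pdiff (\<lambda>Y. Phi_hat p r M Y k j) i b) i b X = 2 * c * of_real (Ai b (i mod p))"
    using L(1,2) by (simp_all add: \<sigma>_def \<beta>_def power2_eq_square)
  show "(\<lambda>t. Phi_hat p r M (coord_shift X i b t) k j) differentiable (at 0)"
    "(\<lambda>t. pdiff (\<lambda>Y. Phi_hat p r M Y k j) i b (coord_shift X i b t)) differentiable (at 0)"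
    using L(3,4) by simp_all
qed

lemma twice_pdiff_Phi_hat:
  assumes inv: "\<And>X. X \<in> U \<Longrightarrow> invertible_p p (Amat p X)" and kj: "k < r - 1" "j < p"
  shows "twice_pdiff p (p + 2*r - 1) U (\<lambda>Y. Phi_hat p r M Y k j)"
  unfolding twice_pdiff_def
proof (intro ballI allI impI)
  fix X i b assume X: "X \<in> U" and i: "i < p + (p + 2*r - 1)" and b: "b < p"
  show "(\<lambda>t. Phi_hat p r M (coord_shift X i b t) k j) differentiable (at 0) \<and>
      (\<lambda>t. pdiff (\<lambda>Y. Phi_hat p r M Y k j) i b (coord_shift X i b t)) differentiable (at 0)"
  proof (cases "i < 2*p")
    case True
    show ?thesis
      using pdiff_Phi_hat_A_row(3,4)[OF is_inverse_inv_p[OF inv[OF X]] True b kj] by blast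
  next
    case False
    then have "i \<in> {2*p..<2*p + 2*r}"
      using i by simp
    then show ?thesis
      using pdiff_Phi_hat_W_row(3,4)[OF _ b kj] by blast
  qed
qed

section \<open>The Laplacian and the conformality operator\<close>

lemma sum_lessThan_add:
  fixes m n :: nat
  shows "(\<Sum>i<m + n. f i) = (\<Sum>i<m. f i) + (\<Sum>i<n. f (m + i))"
  by (induct n) (simp_all add: add.assoc)

lemma msign_mult_self: "of_real (msign p i) * of_real (msign p i) = (1 :: 'a::real_algebra_1)"
  by (simp add: msign_def)

lemma sum_msign_mod_eq_0: "(\<Sum>i<2*p. of_real (msign p i) * h (i mod p)) = (0 :: 'a::real_algebra_1)"
  by (simp add: mult_2 sum_lessThan_add msign_def sum.distrib[symmetric])

lemma sum_rows_split_A_W: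
  fixes p r :: nat
  assumes "0 < r"
  shows "(\<Sum>i<p + (p + 2*r - 1). f i) = (\<Sum>i<2*p. f i) + (\<Sum>i\<in>{2*p..<2*p + 2*r - 1}. f i)"
proof -
  have "p + (p + 2*r - 1) = 2*p + 2*r - 1" "2*p \<le> 2*p + 2*r - 1"
    using assms by linarith+
  then show ?thesis
    unfolding lessThan_atLeast0 by (simp add: sum.atLeastLessThan_concat)
qed

lemma tau_Phi_hat_eq_0:
  assumes inv: "is_inverse p (Amat p X) Ai" and kj: "k < r - 1" "j < p"
  shows "tau p (p + 2*r - 1) (\<lambda>Y. Phi_hat p r M Y k j) X = 0"
proof -
  let ?\<phi> = "\<lambda>Y. Phi_hat p r M Y k j"
  define D where "D a = (\<Sum>b<p. 2 * (mat_mul p (Cmat p r M X) (\<lambda>q j. of_real (Ai q j)) k a * of_real (Ai b j))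
      * of_real (Ai b a))" for a
  have A_rows: "(\<Sum>b<p. of_real (msign p i) * pdiff (pdiff ?\<phi> i b) i b X)
      = of_real (msign p i) * D (i mod p)"
    if "i < 2*p" for i
    unfolding D_def sum_distrib_left
    by (intro sum.cong refl) (simp add: pdiff_Phi_hat_A_row(2)[OF inv that _ kj])
  have W_rows: "(\<Sum>b<p. of_real (msign p i) * pdiff (pdiff ?\<phi> i b) i b X) = 0"
    if "i \<in> {2*p..<2*p + 2*r - 1}" for i
    using pdiff_Phi_hat_W_row(2)[OF _ _ kj] that by (intro sum.neutral) auto
  have "0 < r"
    using kj by simp
  then have "tau p (p + 2*r - 1) ?\<phi> X
      = (\<Sum>i<2*p. of_real (msign p i) * D (i mod p))
        + (\<Sum>i\<in>{2*p..<2*p + 2*r - 1}. \<Sum>b<p. of_real (msign p i) * pdiff (pdiff ?\<phi> i b) i b X)"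
    unfolding tau_def sum_rows_split_A_W[OF \<open>0 < r\<close>]
    by (intro arg_cong2[where f="(+)"] sum.cong refl) (simp_all add: A_rows)
  also have "\<dots> = 0"
    using W_rows by (simp add: sum_msign_mod_eq_0)
  finally show ?thesis .
qed

lemma kappa_Phi_hat_eq_0:
  assumes M: "M \<in> so_r r" and inv: "is_inverse p (Amat p X) Ai"
    and kj: "k < r - 1" "j < p" and kj': "k' < r - 1" "j' < p"
  shows "kappa p (p + 2*r - 1) (\<lambda>Y. Phi_hat p r M Y k j) (\<lambda>Y. Phi_hat p r M Y k' j') X = 0"
proof -
  let ?\<phi> = "\<lambda>Y. Phi_hat p r M Y k j" and ?\<psi> = "\<lambda>Y. Phi_hat p r M Y k' j'"
  let ?C = "mat_mul p (Cmat p r M X) (\<lambda>q j. of_real (Ai q j))"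
  define K where "K a = (\<Sum>b<p. (?C k a * of_real (Ai b j)) * (?C k' a * of_real (Ai b j')))" for a
  define S where "S = (\<Sum>b<p. of_real (inv_p p (Amat p X) b j) * of_real (inv_p p (Amat p X) b j') :: complex)"
  have A_rows: "(\<Sum>b<p. of_real (msign p i) * pdiff ?\<phi> i b X * pdiff ?\<psi> i b X)
      = of_real (msign p i) * K (i mod p)"
    if "i < 2*p" for i
  proof -
    have cube: "m * (m * x) * (m * y) = m * (x * y)" if "m * m = 1" for m x y :: complex
    proof -
      have "m * (m * x) * (m * y) = (m * m) * (m * (x * y))"
        by (simp only: ac_simps)
      then show ?thesis
        using that by simp
    qed
    show ?thesis
      unfolding K_def sum_distrib_left
      by (intro sum.cong refl)
         (simp add: pdiff_Phi_hat_A_row(1)[OF inv that _ kj] pdiff_Phi_hat_A_row(1)[OF inv that _ kj']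
           cube msign_mult_self)
  qed
  have W_rows: "(\<Sum>b<p. of_real (msign p i) * pdiff ?\<phi> i b X * pdiff ?\<psi> i b X)
      = Ccoef p r M i k * Ccoef p r M i k' * S"
    if "i \<in> {2*p..<2*p + 2*r - 1}" for i
  proof -
    have i: "i \<in> {2*p..<2*p + 2*r}" "\<not> i < p"
      using that by auto
    show ?thesis
      unfolding S_def sum_distrib_left
      by (intro sum.cong refl)
        (simp add: pdiff_Phi_hat_W_row(1)[OF i(1) _ kj] pdiff_Phi_hat_W_row(1)[OF i(1) _ kj'] i(2)
          msign_def algebra_simps)
  qed
  have "0 < r"
    using kj by simp
  then have "kappa p (p + 2*r - 1) ?\<phi> ?\<psi> X
      = (\<Sum>i<2*p. of_real (msign p i) * K (i mod p))
        + (\<Sum>i\<in>{2*p..<2*p + 2*r - 1}. Ccoef p r M i k * Ccoef p r M i k' * S)"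
    unfolding kappa_def sum_rows_split_A_W[OF \<open>0 < r\<close>]
    by (intro arg_cong2[where f="(+)"] sum.cong refl) (simp_all add: A_rows W_rows)
  also have "\<dots> = 0"
    using Ccoef_orthogonal[OF M kj(1) kj'(1)] by (simp add: sum_msign_mod_eq_0 sum_distrib_right[symmetric])
  finally show ?thesis .
qed

lemma orthogonal_harmonic_family_Phi_hat:
  assumes M: "M \<in> so_r r" and inv: "\<And>X. X \<in> U \<Longrightarrow> invertible_p p (Amat p X)"
  shows "orthogonal_harmonic_family p (p + 2*r - 1) U
           {(\<lambda>Y. Phi_hat p r M Y k j) | k j. k < r - 1 \<and> j < p}"
  unfolding orthogonal_harmonic_family_def
  using tau_Phi_hat_eq_0[OF is_inverse_inv_p[OF inv]] kappa_Phi_hat_eq_0[OF M is_inverse_inv_p[OF inv]]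
  by blast

lemma GL_invariant_Phi_hat:
  assumes inv: "\<And>X. X \<in> U \<Longrightarrow> invertible_p p (Amat p X)"
  shows "GL_invariant p U (\<lambda>Y. Phi_hat p r M Y k j)"
  unfolding GL_invariant_def invertible_p_iff_is_inverse
proof (intro ballI allI impI)
  fix X g :: rmat
  assume X: "X \<in> U" and "\<exists>h. is_inverse p g h"
  then obtain h where "is_inverse p g h"
    by blast
  then show "Phi_hat p r M (rmul p X g) k j = Phi_hat p r M X k j"
    using Phi_hat_rmul[OF is_inverse_inv_p[OF inv[OF X]]] by simp
qed

theorem proposition5p3:
  fixes p r s :: nat and M :: cmat
  assumes "p \<ge> 1" and "r \<ge> 2" and "s = p + 2 * r" and "M \<in> so_r r"
  shows "(\<forall>X\<in>Upn p s. \<forall>Y\<in>Upn p s. (\<forall>i j. i \<noteq> p + s - 1 \<longrightarrow> X i j = Y i j)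
            \<longrightarrow> Phi_hat p r M X = Phi_hat p r M Y)
       \<and> Upn p (s - 1) \<subseteq> Upn p s
       \<and> (let \<Omega> = {(\<lambda>Y. Phi_hat p r M Y k j) | k j. k < r - 1 \<and> j < p} in
            orthogonal_harmonic_family p (s - 1) (Upn p (s - 1)) \<Omega>
          \<and> (\<forall>\<phi>\<in>\<Omega>. twice_pdiff p (s - 1) (Upn p (s - 1)) \<phi>
                    \<and> GL_invariant p (Upn p (s - 1)) \<phi>))"
proof -
  have s: "s - 1 = p + 2*r - 1" "p + s - 1 = 2*p + 2*r - 1"
    using assms(3) by simp_all
  have inv: "invertible_p p (Amat p X)" if "X \<in> Upn p (p + 2*r - 1)" for X
    using Upn_invertible_Amat[OF that] assms(2) by simp
  have "\<forall>\<phi>\<in>{(\<lambda>Y. Phi_hat p r M Y k j) | k j. k < r - 1 \<and> j < p}.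
      twice_pdiff p (p + 2*r - 1) (Upn p (p + 2*r - 1)) \<phi> \<and> GL_invariant p (Upn p (p + 2*r - 1)) \<phi>"
    using twice_pdiff_Phi_hat[OF inv] GL_invariant_Phi_hat[OF inv] by blast
  moreover have "Upn p (p + 2*r - 1) \<subseteq> Upn p s"
    using assms(3) by (intro Upn_mono) simp
  ultimately show ?thesis
    unfolding Let_def s
    using Phi_hat_independent_of_last_row[OF assms(4)] orthogonal_harmonic_family_Phi_hat[OF assms(4) inv]
    by (intro conjI) blast+
qed

end
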